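(* Let $\mathbb{G}=(\mathcal{V},\mathcal{E})$ be a connected undirected graph on $\mathcal{V}=\{1,\dots,m\}$ with $\bar m$ edges. For each edge $(i,j)$, in either order, let $A_{ij}\in\mathbb{R}^{d_{ij}\times n}$ have full row rank and $\boldsymbol{b}_{ij}\in\mathbb{R}^{d_{ij}}$, with $A_{ij}=A_{ji}$, $\boldsymbol{b}_{ij}=-\boldsymbol{b}_{ji}$. Let $\boldsymbol{f}_i:\mathbb{R}^n\to\mathbb{R}$ be continuously differentiable and convex, $\boldsymbol{f}(\boldsymbol{x})=\sum_i\boldsymbol{f}_i(\boldsymbol{x}_i)$, and assume the problem $\min\sum_i\boldsymbol{f}_i(\boldsymbol{x}_i)$ subject to $A_{ij}(\boldsymbol{x}_i-\boldsymbol{x}_j)=\boldsymbol{b}_{ij}$ for all $(i,j)\in\mathcal{E}$ has a solution, and that $\ker\bar H'\cap\operatorname{image}\bar P=\{\boldsymbol{0}\}$. Define the augmented Lagrangian $\boldsymbol{F}:\mathbb{R}^{mn}\times\mathbb{R}^{mn}\to\mathbb{R}$, $$\boldsymbol{F}(\boldsymbol{x},\boldsymbol{\lambda})=\boldsymbol{f}(\boldsymbol{x})+\boldsymbol{\lambda}'\bar H'\bar P(\bar H\boldsymbol{x}-\bar{\boldsymbol{b}})+\tfrac12\|\bar P(\bar H\boldsymbol{x}-\bar{\boldsymbol{b}})\|^2,$$ and the dynamics $$\dot{\boldsymbol{x}}=-\nabla\boldsymbol{f}(\boldsymbol{x})-\bar H'\bar P\bar H\boldsymbol{\lambda}-\bar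 H'\bar P(\bar H\boldsymbol{x}-\bar{\boldsymbol{b}}),\qquad \dot{\boldsymbol{\lambda}}=\bar H'\bar P(\bar H\boldsymbol{x}-\bar{\boldsymbol{b}}).$$ Then every equilibrium $(\bar{\boldsymbol{x}},\bar{\boldsymbol{\lambda}})$ of these dynamics is a global min-max saddle point of $\boldsymbol{F}$, i.e. $\boldsymbol{F}(\bar{\boldsymbol{x}},\boldsymbol{\lambda})\le\boldsymbol{F}(\bar{\boldsymbol{x}},\bar{\boldsymbol{\lambda}})\le\boldsymbol{F}(\boldsymbol{x},\bar{\boldsymbol{\lambda}})$ for all $\boldsymbol{x},\boldsymbol{\lambda}\in\mathbb{R}^{mn}$.
   Context: $\boldsymbol{x}=\mathrm{col}\{\boldsymbol{x}_1,\dots,\boldsymbol{x}_m\}$, $'$ denotes transpose, $\|\cdot\|$ the Euclidean norm. $P_{ij}=A_{ij}'(A_{ij}A_{ij}')^{-1}A_{ij}$, $\bar{\boldsymbol{b}}_{ij}=A_{ij}'(A_{ij}A_{ij}')^{-1}\boldsymbol{b}_{ij}$. With a fixed enumeration/orientation of edges $(i_1,j_1),\dots,(i_{\bar m},j_{\bar m})$: $\bar P=\mathrm{diag}\{P_{i_1j_1},\dots,P_{i_{\bar m}j_{\bar m}}\}$ (block diagonal), $\bar{\boldsymbol{b}}=\mathrm{col}\{\bar{\boldsymbol{b}}_{i_lj_l}\}_{l=1}^{\bar m}$, $H\in\mathbb{R}^{\bar m\times m}$ the oriented incidence matrix whose $l$-th row has $1$ in column $i_l$, $-1$ in column $j_l$,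 $0$ elsewhere, $\bar H=H\otimes I_n$. *)

theory Defs
  imports "HOL-Analysis.Analysis"
begin

text \<open>Vertices are 0,...,m-1; vectors of R^n are real^'n.
  A matrix A in R^(d x n) is represented by the list of its d rows (each in R^n);
  vectors of R^d are real lists of length d.\<close>

definition mat_app :: "(real^'n) list \<Rightarrow> real^'n \<Rightarrow> real list" where
  "mat_app rs v = map (\<lambda>r. r \<bullet> v) rs"

definition mat_tr_app :: "(real^'n) list \<Rightarrow> real list \<Rightarrow> real^'n" where
  "mat_tr_app rs y = (\<Sum>k<length rs. (y ! k) *\<^sub>R (rs ! k))"

definition full_row_rank :: "(real^'n) list \<Rightarrow> bool" where
  "full_row_rank rs \<longleftrightarrow> dim (span (set rs)) = length rs"

definition gram :: "(real^'n) list \<Rightarrow> nat \<Rightarrow> nat \<Rightarrow> real" where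
  "gram rs k l = (rs ! k) \<bullet> (rs ! l)"

definition sq_inv :: "nat \<Rightarrow> (nat \<Rightarrow> nat \<Rightarrow> real) \<Rightarrow> (nat \<Rightarrow> nat \<Rightarrow> real)" where
  "sq_inv d M = (SOME N. (\<forall>i<d. \<forall>j<d. (\<Sum>k<d. M i k * N k j) = (if i = j then 1 else 0))
                        \<and> (\<forall>i<d. \<forall>j<d. (\<Sum>k<d. N i k * M k j) = (if i = j then 1 else 0)))"

definition sq_app :: "nat \<Rightarrow> (nat \<Rightarrow> nat \<Rightarrow> real) \<Rightarrow> real list \<Rightarrow> real list" where
  "sq_app d N y = map (\<lambda>k. \<Sum>l<d. N k l * (y ! l)) [0..<d]"

text \<open>P = A'(AA')^{-1}A, applied to a vector\<close>
definition projP :: "(real^'n) list \<Rightarrow> real^'n \<Rightarrow> real^'n" where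
  "projP rs v = mat_tr_app rs (sq_app (length rs) (sq_inv (length rs) (gram rs)) (mat_app rs v))"

text \<open>bbar = A'(AA')^{-1}b\<close>
definition bvec :: "(real^'n) list \<Rightarrow> real list \<Rightarrow> real^'n" where
  "bvec rs b = mat_tr_app rs (sq_app (length rs) (sq_inv (length rs) (gram rs)) b)"

text \<open>Oriented incidence matrix H (mbar x m), row l = edge ed l\<close>
definition incid :: "(nat \<Rightarrow> nat \<times> nat) \<Rightarrow> nat \<Rightarrow> nat \<Rightarrow> real" where
  "incid ed l c = (if c = fst (ed l) then 1 else if c = snd (ed l) then -1 else 0)"

text \<open>Block vectors: x in R^(mn) as nat => real^'n (blocks 0..m-1);
  edge-indexed vectors in R^(mbar n) as nat => real^'n (blocks 0..mbar-1).\<close>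

text \<open>Hbar x = (H \<otimes> I_n) x\<close>
definition Hbar :: "(nat \<Rightarrow> nat \<times> nat) \<Rightarrow> (nat \<Rightarrow> real^'n) \<Rightarrow> (nat \<Rightarrow> real^'n)" where
  "Hbar ed x = (\<lambda>l. (\<Sum>c\<in>{fst (ed l), snd (ed l)}. incid ed l c *\<^sub>R x c))"

text \<open>Hbar' y = (H' \<otimes> I_n) y\<close>
definition HbarT :: "(nat \<Rightarrow> nat \<times> nat) \<Rightarrow> nat \<Rightarrow> (nat \<Rightarrow> real^'n) \<Rightarrow> (nat \<Rightarrow> real^'n)" where
  "HbarT ed mbar y = (\<lambda>i. \<Sum>l<mbar. incid ed l i *\<^sub>R y l)"

text \<open>Pbar = blockdiag(P_{i_l j_l})\<close>
definition Pbar :: "(nat \<Rightarrow> nat \<Rightarrow> (real^'n) list) \<Rightarrow> (nat \<Rightarrow> nat \<times> nat) \<Rightarrow>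
    (nat \<Rightarrow> real^'n) \<Rightarrow> (nat \<Rightarrow> real^'n)" where
  "Pbar A ed y = (\<lambda>l. projP (A (fst (ed l)) (snd (ed l))) (y l))"

definition bbar :: "(nat \<Rightarrow> nat \<Rightarrow> (real^'n) list) \<Rightarrow> (nat \<Rightarrow> nat \<Rightarrow> real list) \<Rightarrow>
    (nat \<Rightarrow> nat \<times> nat) \<Rightarrow> (nat \<Rightarrow> real^'n)" where
  "bbar A b ed = (\<lambda>l. bvec (A (fst (ed l)) (snd (ed l))) (b (fst (ed l)) (snd (ed l))))"

definition resid :: "(nat \<Rightarrow> nat \<Rightarrow> (real^'n) list) \<Rightarrow> (nat \<Rightarrow> nat \<Rightarrow> real list) \<Rightarrow>
    (nat \<Rightarrow> nat \<times> nat) \<Rightarrow> (nat \<Rightarrow> real^'n) \<Rightarrow> (nat \<Rightarrow> real^'n)" where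
  "resid A b ed x = Pbar A ed (\<lambda>l. Hbar ed x l - bbar A b ed l)"

definition augLag :: "nat \<Rightarrow> nat \<Rightarrow> (nat \<Rightarrow> nat \<times> nat) \<Rightarrow> (nat \<Rightarrow> nat \<Rightarrow> (real^'n) list) \<Rightarrow>
    (nat \<Rightarrow> nat \<Rightarrow> real list) \<Rightarrow> (nat \<Rightarrow> real^'n \<Rightarrow> real) \<Rightarrow>
    (nat \<Rightarrow> real^'n) \<Rightarrow> (nat \<Rightarrow> real^'n) \<Rightarrow> real" where
  "augLag m mbar ed A b f x lam =
     (\<Sum>i<m. f i (x i))
     + (\<Sum>i<m. lam i \<bullet> HbarT ed mbar (resid A b ed x) i)
     + 1/2 * (\<Sum>l<mbar. (norm (resid A b ed x l))\<^sup>2)"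

text \<open>Equilibrium of the primal-dual dynamics (g i = gradient of f i)\<close>
definition equilibrium :: "nat \<Rightarrow> nat \<Rightarrow> (nat \<Rightarrow> nat \<times> nat) \<Rightarrow> (nat \<Rightarrow> nat \<Rightarrow> (real^'n) list) \<Rightarrow>
    (nat \<Rightarrow> nat \<Rightarrow> real list) \<Rightarrow> (nat \<Rightarrow> real^'n \<Rightarrow> real^'n) \<Rightarrow>
    (nat \<Rightarrow> real^'n) \<Rightarrow> (nat \<Rightarrow> real^'n) \<Rightarrow> bool" where
  "equilibrium m mbar ed A b g x lam \<longleftrightarrow>
     (\<forall>i<m. - g i (x i) - HbarT ed mbar (Pbar A ed (Hbar ed lam)) i
              - HbarT ed mbar (resid A b ed x) i = 0)
     \<and> (\<forall>i<m. HbarT ed mbar (resid A b ed x) i = 0)"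

end

(*
  At an equilibrium the dual equation says H' P (H xb - bb) = 0, and the assumption that
  ker H' meets image P only in 0 upgrades this to P (H xb - bb) = 0. Hence F(xb, lam) =
  f(xb) for every lam. For the primal side, P (H x - bb) = P H (x - xb), so the multiplier
  term of F(x, lamb) equals lamb' L (x - xb) with L = H' P H. P is symmetric (the Gram
  matrices A A' are invertible by full row rank, and the inverse of a symmetric matrix is
  symmetric), hence so is L, and the primal equation grad f(xb) = - L lamb turns the
  multiplier term into - grad f(xb)' (x - xb). The tangent-plane inequality of the convex
  f and the nonnegativity of the penalty then give F(x, lamb) >= f(xb).
*)
theory Submission
  imports Defs "Jordan_Normal_Form.Determinant"
begin

lemma convex_on_imp_above_tangent_plane:
  fixes f :: "'a::real_normed_vector \<Rightarrow> real"
  assumes convex: "convex_on UNIV f" and deriv: "(f has_derivative D) (at z)"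
  shows "f z + D (y - z) \<le> f y"
proof -
  define \<phi> where "\<phi> t = f (z + t *\<^sub>R (y - z))" for t
  have "convex_on UNIV \<phi>"
  proof (rule convex_onI)
    fix a t u :: real assume a: "0 < a" "a < 1"
    have "z + ((1 - a) *\<^sub>R t + a *\<^sub>R u) *\<^sub>R (y - z)
        = (1 - a) *\<^sub>R (z + t *\<^sub>R (y - z)) + a *\<^sub>R (z + u *\<^sub>R (y - z))"
      by (simp add: algebra_simps)
    then show "\<phi> ((1 - a) *\<^sub>R t + a *\<^sub>R u) \<le> (1 - a) * \<phi> t + a * \<phi> u"
      using convex_onD[OF convex, of a "z + t *\<^sub>R (y - z)" "z + u *\<^sub>R (y - z)"] a
      by (simp add: \<phi>_def)
  qed simp
  moreover have "(\<phi> has_field_derivative D (y - z)) (at 0 within UNIV)"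
  proof -
    have "((\<lambda>t::real. z + t *\<^sub>R (y - z)) has_derivative (\<lambda>t. t *\<^sub>R (y - z))) (at 0)"
      by (auto intro!: derivative_eq_intros)
    then have "(\<phi> has_derivative (\<lambda>t. D (t *\<^sub>R (y - z)))) (at 0)"
      unfolding \<phi>_def using has_derivative_compose deriv by fastforce
    moreover have "(\<lambda>t. D (t *\<^sub>R (y - z))) = (*) (D (y - z))"
      using linear_scale[OF has_derivative_linear[OF deriv]] by (auto simp: mult.commute)
    ultimately show ?thesis
      by (simp add: has_field_derivative_def)
  qed
  ultimately have "D (y - z) * (1 - 0) \<le> \<phi> 1 - \<phi> 0"
    by (intro convex_on_imp_above_tangent) auto
  then show ?thesis by (simp add: \<phi>_def)
qed

definition is_sq_inverse :: "nat \<Rightarrow> (nat \<Rightarrow> nat \<Rightarrow> real) \<Rightarrow> (nat \<Rightarrow> nat \<Rightarrow> real) \<Rightarrow> bool" where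
  "is_sq_inverse d M N \<longleftrightarrow>
     (\<forall>i<d. \<forall>j<d. (\<Sum>k<d. M i k * N k j) = (if i = j then 1 else 0)) \<and>
     (\<forall>i<d. \<forall>j<d. (\<Sum>k<d. N i k * M k j) = (if i = j then 1 else 0))"

lemma is_sq_inverse_sq_inv:
  assumes "is_sq_inverse d M N"
  shows "is_sq_inverse d M (sq_inv d M)"
proof -
  have "sq_inv d M = (SOME N. is_sq_inverse d M N)"
    unfolding sq_inv_def is_sq_inverse_def ..
  then show ?thesis
    using someI[of "is_sq_inverse d M", OF assms] by simp
qed

lemma is_sq_inverse_symmetric:
  assumes inv: "is_sq_inverse d M N" and M_sym: "\<forall>i<d. \<forall>j<d. M i j = M j i"
    and "i < d" "j < d"
  shows "N i j = N j i"
proof -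
  have right_inv: "(\<Sum>k<d. M l k * N k i) = (if l = i then 1 else 0)" if "l < d" for l
    using inv \<open>i < d\<close> that by (simp add: is_sq_inverse_def)
  have "N j i = (\<Sum>k<d. if k = j then N k i else 0)"
    using \<open>j < d\<close> by simp
  also have "\<dots> = (\<Sum>k<d. N k i * (\<Sum>l<d. M k l * N l j))"
    using inv \<open>j < d\<close> by (intro sum.cong) (auto simp: is_sq_inverse_def)
  also have "\<dots> = (\<Sum>l<d. \<Sum>k<d. N k i * M k l * N l j)"
    by (subst sum.swap) (simp add: sum_distrib_left mult.assoc)
  also have "\<dots> = (\<Sum>l<d. (\<Sum>k<d. M l k * N k i) * N l j)"
    using M_sym by (intro sum.cong refl) (simp add: sum_distrib_left sum_distrib_right mult_ac)
  also have "\<dots> = (\<Sum>l<d. if l = i then N l j else 0)"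
    using right_inv by (intro sum.cong) auto
  also have "\<dots> = N i j"
    using \<open>i < d\<close> by simp
  finally show ?thesis ..
qed

lemma is_sq_inverse_of_mat:
  assumes "B \<in> carrier_mat d d"
    and "B * mat d d (\<lambda>(i, j). M i j) = 1\<^sub>m d" "mat d d (\<lambda>(i, j). M i j) * B = 1\<^sub>m d"
  shows "is_sq_inverse d M (\<lambda>i j. B $$ (i, j))"
proof -
  have "(\<Sum>k<d. M i k * B $$ (k, j)) = (mat d d (\<lambda>(i, j). M i j) * B) $$ (i, j)"
    and "(\<Sum>k<d. B $$ (i, k) * M k j) = (B * mat d d (\<lambda>(i, j). M i j)) $$ (i, j)"
    if "i < d" "j < d" for i j
    using that assms(1) by (simp_all add: scalar_prod_def atLeast0LessThan)
  with assms(2,3) show ?thesis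
    unfolding is_sq_inverse_def by simp
qed


lemma full_row_rank_lincomb_eq_0:
  assumes frr: "full_row_rank rs" and comb: "(\<Sum>l<length rs. c l *\<^sub>R rs ! l) = 0"
    and "k < length rs"
  shows "c k = 0"
proof -
  have dim: "dim (span (set rs)) = length rs"
    using frr unfolding full_row_rank_def .
  have "dim (span (set rs)) \<le> card (set rs)" "card (set rs) \<le> length rs"
    by (simp_all add: dim_le_card' card_length)
  then have card: "card (set rs) = length rs"
    using dim by simp
  then have "distinct rs"
    by (simp add: card_distinct)
  then have bij: "bij_betw (nth rs) {..<length rs} (set rs)"
    by (auto simp: bij_betw_def distinct_conv_nth inj_on_def set_conv_nth)
  have indep: "independent (set rs)"
    using card_eq_dim[of "set rs" "span (set rs)"] card dim by (simp add: span_superset)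
  define u where "u v = c (the_inv_into {..<length rs} (nth rs) v)" for v
  have "(\<Sum>v\<in>set rs. u v *\<^sub>R v) = (\<Sum>l<length rs. u (rs ! l) *\<^sub>R rs ! l)"
    using sum.reindex_bij_betw[OF bij, of "\<lambda>v. u v *\<^sub>R v"] by simp
  also have "\<dots> = 0"
    using bij comb by (simp add: u_def the_inv_into_f_f bij_betw_def)
  finally have "u (rs ! k) = 0"
    using indep independent_explicit[of "set rs"] \<open>k < length rs\<close> by auto
  then show ?thesis
    using bij \<open>k < length rs\<close> by (simp add: u_def the_inv_into_f_f bij_betw_def)
qed

lemma gram_mult_eq_0_imp_eq_0:
  assumes frr: "full_row_rank rs"
    and ker: "\<forall>k<length rs. (\<Sum>l<length rs. gram rs k l * c l) = 0" and "l < length rs"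
  shows "c l = 0"
proof -
  define w where "w = (\<Sum>l<length rs. c l *\<^sub>R rs ! l)"
  have "rs ! k \<bullet> w = 0" if "k < length rs" for k
    using ker that by (simp add: w_def inner_sum_right gram_def mult.commute)
  then have "w \<bullet> w = 0"
    by (simp add: w_def inner_sum_left)
  then show ?thesis
    using full_row_rank_lincomb_eq_0[OF frr _ \<open>l < length rs\<close>] by (simp add: w_def)
qed

lemma gram_invertible:
  assumes frr: "full_row_rank rs"
  shows "\<exists>N. is_sq_inverse (length rs) (gram rs) N"
proof -
  define d where "d = length rs"
  define G where "G = mat d d (\<lambda>(i, j). gram rs i j)"
  have G: "G \<in> carrier_mat d d"
    by (simp add: G_def)
  have "det G \<noteq> 0"
  proof
    assume "det G = 0"
    then obtain v where v: "v \<in> carrier_vec d" "v \<noteq> 0\<^sub>v d" "G *\<^sub>v v = 0\<^sub>v d"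
      using det_0_iff_vec_prod_zero_field[OF G] by auto
    have "(\<Sum>l<d. gram rs k l * vec_index v l) = vec_index (G *\<^sub>v v) k" if "k < d" for k
      using v(1) that by (simp add: G_def scalar_prod_def atLeast0LessThan)
    then have "\<forall>k<d. (\<Sum>l<d. gram rs k l * vec_index v l) = 0"
      using v(3) by simp
    then have "vec_index v l = 0" if "l < d" for l
      using gram_mult_eq_0_imp_eq_0[OF frr, of "vec_index v"] that by (simp add: d_def)
    then show False
      using v(1,2) by (metis eq_vecI index_zero_vec(1,2) carrier_vecD)
  qed
  then obtain B where "B \<in> carrier_mat d d" "B * G = 1\<^sub>m d" "G * B = 1\<^sub>m d"
    using det_non_zero_imp_unit[OF G, of "()"] by (auto simp: Units_def ring_mat_def)
  then show ?thesis
    using is_sq_inverse_of_mat unfolding G_def d_def by blast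
qed

lemma projP_eq:
  "projP rs u = (\<Sum>k<length rs.
     (\<Sum>l<length rs. sq_inv (length rs) (gram rs) k l * (rs ! l \<bullet> u)) *\<^sub>R rs ! k)"
  unfolding projP_def mat_tr_app_def sq_app_def mat_app_def
  by (intro sum.cong) auto

lemma projP_diff: "projP rs (u - v) = projP rs u - projP rs v"
  unfolding projP_eq
  by (simp add: inner_diff_right right_diff_distrib sum_subtractf scaleR_diff_left)

lemma projP_self_adjoint:
  assumes frr: "full_row_rank rs"
  shows "projP rs u \<bullet> v = u \<bullet> projP rs v"
proof -
  define d where "d = length rs"
  define N where "N = sq_inv d (gram rs)"
  have "is_sq_inverse d (gram rs) N"
    using gram_invertible[OF frr] is_sq_inverse_sq_inv by (auto simp: N_def d_def)
  then have N_sym: "N k l = N l k" if "k < d" "l < d" for k l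
    using is_sq_inverse_symmetric that by (simp add: gram_def inner_commute)
  have "projP rs u \<bullet> v = (\<Sum>k<d. \<Sum>l<d. N k l * (rs ! l \<bullet> u) * (rs ! k \<bullet> v))"
    unfolding projP_eq by (simp add: N_def d_def inner_sum_left sum_distrib_right)
  also have "\<dots> = (\<Sum>l<d. \<Sum>k<d. N l k * (rs ! l \<bullet> u) * (rs ! k \<bullet> v))"
    by (subst sum.swap) (intro sum.cong refl, simp add: N_sym)
  also have "\<dots> = u \<bullet> projP rs v"
    unfolding projP_eq
    by (simp add: N_def d_def inner_sum_right sum_distrib_left inner_commute mult_ac)
  finally show ?thesis .
qed

lemma Hbar_edge: "fst (ed l) \<noteq> snd (ed l) \<Longrightarrow> Hbar ed x l = x (fst (ed l)) - x (snd (ed l))"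
  by (simp add: Hbar_def incid_def)

lemma sum_incid_mult:
  assumes "fst (ed l) \<noteq> snd (ed l)" "fst (ed l) < m" "snd (ed l) < m"
  shows "(\<Sum>i<m. incid ed l i * h i) = h (fst (ed l)) - h (snd (ed l))"
proof -
  have "(\<Sum>i<m. incid ed l i * h i)
      = (\<Sum>i<m. (if i = fst (ed l) then h i else 0) - (if i = snd (ed l) then h i else 0))"
    using assms(1) by (intro sum.cong) (auto simp: incid_def)
  also have "\<dots> = h (fst (ed l)) - h (snd (ed l))"
    using assms by (simp add: sum_subtractf)
  finally show ?thesis .
qed

lemma HbarT_adjoint:
  assumes edges: "\<forall>l<mbar. fst (ed l) < m \<and> snd (ed l) < m \<and> fst (ed l) \<noteq> snd (ed l)"
  shows "(\<Sum>i<m. x i \<bullet> HbarT ed mbar y i) = (\<Sum>l<mbar. Hbar ed x l \<bullet> y l)"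
proof -
  have "(\<Sum>i<m. x i \<bullet> HbarT ed mbar y i) = (\<Sum>l<mbar. \<Sum>i<m. incid ed l i * (x i \<bullet> y l))"
    by (simp add: HbarT_def inner_sum_right sum.swap[of _ "{..<m}"])
  also have "\<dots> = (\<Sum>l<mbar. Hbar ed x l \<bullet> y l)"
    using edges by (intro sum.cong refl) (simp add: sum_incid_mult Hbar_edge inner_diff_left)
  finally show ?thesis .
qed

lemma HbarT_cong: "\<forall>l<mbar. y l = z l \<Longrightarrow> HbarT ed mbar y = HbarT ed mbar z"
  by (simp add: HbarT_def)

definition weighted_laplacian :: "(nat \<Rightarrow> nat \<times> nat) \<Rightarrow> nat \<Rightarrow> (nat \<Rightarrow> nat \<Rightarrow> (real^'n) list) \<Rightarrow>
    (nat \<Rightarrow> real^'n) \<Rightarrow> (nat \<Rightarrow> real^'n)" where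
  "weighted_laplacian ed mbar A x = HbarT ed mbar (Pbar A ed (Hbar ed x))"

lemma weighted_laplacian_self_adjoint:
  assumes edges: "\<forall>l<mbar. fst (ed l) < m \<and> snd (ed l) < m \<and> fst (ed l) \<noteq> snd (ed l)"
    and frr: "\<forall>l<mbar. full_row_rank (A (fst (ed l)) (snd (ed l)))"
  shows "(\<Sum>i<m. x i \<bullet> weighted_laplacian ed mbar A y i)
       = (\<Sum>i<m. weighted_laplacian ed mbar A x i \<bullet> y i)"
proof -
  have "(\<Sum>i<m. x i \<bullet> weighted_laplacian ed mbar A y i)
      = (\<Sum>l<mbar. Hbar ed x l \<bullet> Pbar A ed (Hbar ed y) l)"
    unfolding weighted_laplacian_def using HbarT_adjoint[OF edges] .
  also have "\<dots> = (\<Sum>l<mbar. Hbar ed y l \<bullet> Pbar A ed (Hbar ed x) l)"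
    using frr
    by (intro sum.cong refl) (simp add: Pbar_def inner_commute[of "Hbar ed y _"] projP_self_adjoint)
  also have "\<dots> = (\<Sum>i<m. y i \<bullet> weighted_laplacian ed mbar A x i)"
    unfolding weighted_laplacian_def by (rule HbarT_adjoint[OF edges, symmetric])
  finally show ?thesis
    by (simp add: inner_commute)
qed

lemma resid_eq_Pbar_Hbar_diff:
  assumes "fst (ed l) \<noteq> snd (ed l)" and "resid A b ed y l = 0"
  shows "resid A b ed x l = Pbar A ed (Hbar ed (\<lambda>i. x i - y i)) l"
proof -
  have "resid A b ed x l = resid A b ed x l - resid A b ed y l"
    using assms(2) by simp
  also have "\<dots> = projP (A (fst (ed l)) (snd (ed l)))
      ((Hbar ed x l - bbar A b ed l) - (Hbar ed y l - bbar A b ed l))"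
    by (simp add: resid_def Pbar_def projP_diff)
  also have "(Hbar ed x l - bbar A b ed l) - (Hbar ed y l - bbar A b ed l) = Hbar ed (\<lambda>i. x i - y i) l"
    using assms(1) by (simp add: Hbar_edge algebra_simps)
  finally show ?thesis
    by (simp add: Pbar_def)
qed

lemma augLag_eq_of_HbarT_resid_eq_0:
  assumes "\<forall>i<m. HbarT ed mbar (resid A b ed x) i = 0"
  shows "augLag m mbar ed A b f x lam
       = (\<Sum>i<m. f i (x i)) + 1/2 * (\<Sum>l<mbar. (norm (resid A b ed x l))\<^sup>2)"
  using assms by (simp add: augLag_def)

lemma augLag_ge_of_stationary:
  assumes edges: "\<forall>l<mbar. fst (ed l) < m \<and> snd (ed l) < m \<and> fst (ed l) \<noteq> snd (ed l)"
    and frr: "\<forall>l<mbar. full_row_rank (A (fst (ed l)) (snd (ed l)))"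
    and convex: "\<forall>i<m. convex_on UNIV (f i)"
    and deriv: "\<forall>i<m. (f i has_derivative (\<lambda>h. grad i \<bullet> h)) (at (xb i))"
    and grad: "\<forall>i<m. grad i = - weighted_laplacian ed mbar A lamb i"
    and feasible: "\<forall>l<mbar. resid A b ed xb l = 0"
  shows "(\<Sum>i<m. f i (xb i)) \<le> augLag m mbar ed A b f x lamb"
proof -
  define dx where "dx i = x i - xb i" for i
  have "\<forall>l<mbar. resid A b ed x l = Pbar A ed (Hbar ed dx) l"
    using edges feasible resid_eq_Pbar_Hbar_diff unfolding dx_def by blast
  then have "(\<Sum>i<m. lamb i \<bullet> HbarT ed mbar (resid A b ed x) i)
      = (\<Sum>i<m. lamb i \<bullet> weighted_laplacian ed mbar A dx i)"
    unfolding weighted_laplacian_def by (simp only: HbarT_cong)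
  also have "\<dots> = (\<Sum>i<m. weighted_laplacian ed mbar A lamb i \<bullet> dx i)"
    using weighted_laplacian_self_adjoint[OF edges frr] .
  also have "\<dots> = - (\<Sum>i<m. grad i \<bullet> dx i)"
    using grad by (simp add: sum_negf)
  finally have multiplier: "(\<Sum>i<m. lamb i \<bullet> HbarT ed mbar (resid A b ed x) i)
      = - (\<Sum>i<m. grad i \<bullet> dx i)" .
  have "(\<Sum>i<m. f i (xb i) + grad i \<bullet> dx i) \<le> (\<Sum>i<m. f i (x i))"
    using convex deriv unfolding dx_def by (intro sum_mono convex_on_imp_above_tangent_plane) auto
  moreover have "0 \<le> (\<Sum>l<mbar. (norm (resid A b ed x l))\<^sup>2)"
    by (simp add: sum_nonneg)
  ultimately show ?thesis
    unfolding augLag_def multiplier by (simp add: sum.distrib)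
qed

theorem lemma2:
  fixes m mbar :: nat
    and E :: "(nat \<times> nat) set"
    and ed :: "nat \<Rightarrow> nat \<times> nat"
    and A :: "nat \<Rightarrow> nat \<Rightarrow> (real^'n) list"
    and b :: "nat \<Rightarrow> nat \<Rightarrow> real list"
    and f :: "nat \<Rightarrow> real^'n \<Rightarrow> real"
    and g :: "nat \<Rightarrow> real^'n \<Rightarrow> real^'n"
    and xb lamb :: "nat \<Rightarrow> real^'n"
  assumes E_vert: "E \<subseteq> {0..<m} \<times> {0..<m}"
    and E_sym: "\<And>i j. (i, j) \<in> E \<Longrightarrow> (j, i) \<in> E"
    and E_irrefl: "\<And>i. (i, i) \<notin> E"
    and connected: "\<forall>i<m. \<forall>j<m. (i, j) \<in> E\<^sup>*"
    and ed_E: "\<forall>l<mbar. ed l \<in> E"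
    and ed_enum: "\<forall>(i, j)\<in>E. \<exists>!l. l < mbar \<and> (ed l = (i, j) \<or> ed l = (j, i))"
    and A_rank: "\<forall>(i, j)\<in>E. full_row_rank (A i j)"
    and b_len: "\<forall>(i, j)\<in>E. length (b i j) = length (A i j)"
    and A_sym: "\<forall>(i, j)\<in>E. A i j = A j i"
    and b_anti: "\<forall>(i, j)\<in>E. b i j = map uminus (b j i)"
    and f_grad: "\<forall>i<m. \<forall>z. (f i has_derivative (\<lambda>h. g i z \<bullet> h)) (at z)"
    and g_cont: "\<forall>i<m. continuous_on UNIV (g i)"
    and f_convex: "\<forall>i<m. convex_on UNIV (f i)"
    and solvable: "\<exists>xs. (\<forall>(i, j)\<in>E. mat_app (A i j) (xs i - xs j) = b i j) \<and>
        (\<forall>x. (\<forall>(i, j)\<in>E. mat_app (A i j) (x i - x j) = b i j) \<longrightarrow>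
             (\<Sum>i<m. f i (xs i)) \<le> (\<Sum>i<m. f i (x i)))"
    and ker_img: "\<forall>z. (\<forall>i<m. HbarT ed mbar (Pbar A ed z) i = 0) \<longrightarrow> (\<forall>l<mbar. Pbar A ed z l = 0)"
    and equil: "equilibrium m mbar ed A b g xb lamb"
  shows "\<forall>x lam. augLag m mbar ed A b f xb lam \<le> augLag m mbar ed A b f xb lamb
              \<and> augLag m mbar ed A b f xb lamb \<le> augLag m mbar ed A b f x lamb"
proof -
  have edges: "\<forall>l<mbar. fst (ed l) < m \<and> snd (ed l) < m \<and> fst (ed l) \<noteq> snd (ed l)"
    using ed_E E_vert E_irrefl by (metis atLeastLessThan_iff mem_Sigma_iff prod.collapse subsetD)
  have frr: "\<forall>l<mbar. full_row_rank (A (fst (ed l)) (snd (ed l)))"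
    using ed_E A_rank by (metis case_prodD prod.collapse)
  have stationary: "\<forall>i<m. HbarT ed mbar (resid A b ed xb) i = 0"
    and grad: "\<forall>i<m. g i (xb i) = - weighted_laplacian ed mbar A lamb i"
    using equil unfolding equilibrium_def weighted_laplacian_def
    by (auto simp: diff_eq_eq) (metis minus_minus)
  have feasible: "\<forall>l<mbar. resid A b ed xb l = 0"
    using ker_img stationary unfolding resid_def by blast
  have saddle_value: "augLag m mbar ed A b f xb lam = (\<Sum>i<m. f i (xb i))" for lam
    using augLag_eq_of_HbarT_resid_eq_0[OF stationary] feasible by simp
  show ?thesis
    using augLag_ge_of_stationary[OF edges frr f_convex _ grad feasible] f_grad
    by (simp add: saddle_value)
qed

end
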